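(* Let $\mathbf{u}=(u_1,u_2)\in\mathbb{R}[x_1,x_2]_d^2$ and $p\in\Sigma[x_1,x_2]_{2d}$, and suppose $\nabla f_p(\mathbf{u})=0$ and $\nabla^2 f_p(\mathbf{u})\succeq 0$. If $$p\in\operatorname{im}(\mathcal{A}_{\mathbf{u}})+\operatorname{cone}\big(\sigma(\ker(\mathcal{A}_{\mathbf{u}}))\big),$$ then $f_p(\mathbf{u})=0$.
   Context: $\mathbb{R}[x_1,x_2]_n$ denotes the space of real binary forms of degree $n$, and $\Sigma[x_1,x_2]_{2d}$ the cone of sums of squares of binary forms of degree $d$. $\mathcal{A}_{\mathbf{u}}:\mathbb{R}[x_1,x_2]_d^2\to\mathbb{R}[x_1,x_2]_{2d}$ is the linear map $(v_1,v_2)\mapsto u_1v_1+u_2v_2$, and $\sigma:\mathbb{R}[x_1,x_2]_d^2\to\mathbb{R}[x_1,x_2]_{2d}$ is $(v_1,v_2)\mapsto v_1^2+v_2^2$; $\operatorname{cone}(S)$ is the convex cone generated by $S$ (nonnegative combinations). Fix any inner product $\langle\cdot,\cdot\rangle$ on $\mathbb{R}[x_1,x_2]_{2d}$ with norm $\|\cdot\|$ and let $f_p(\mathbf{u})=\|\sigma(\mathbf{u})-p\|^2$. Derivatives are with respect to the vector space $\mathbb{R}[x_1,x_2]_d^2$: $\nabla f_p(\mathbf{u})=0$ means $\langle\mathcal{A}_{\mathbf{u}}(\mathbf{v}),\sigma(\mathbf{u})-p\rangle=0$ for all $\mathbf{v}$, and $\nabla^2 f_p(\mathbf{u})\succeq0$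 means $\langle\sigma(\mathbf{v}),\sigma(\mathbf{u})-p\rangle+2\|\mathcal{A}_{\mathbf{u}}(\mathbf{v})\|^2\ge0$ for all $\mathbf{v}\in\mathbb{R}[x_1,x_2]_d^2$. *)

theory Defs
  imports "HOL-Computational_Algebra.Polynomial"
begin

text \<open>Binary forms of degree n are encoded by their dehomogenisation:
  the form \<Sum> c_i x1^i x2^(n-i) corresponds to the univariate polynomial
  \<Sum> c_i x^i of degree at most n.  This is a linear bijection which is
  compatible with multiplication (forms of degree a times forms of degree b
  give forms of degree a+b).\<close>

definition forms :: "nat \<Rightarrow> real poly set" where
  "forms n = {q. degree q \<le> n}"

definition sos_forms :: "nat \<Rightarrow> real poly set" where
  "sos_forms d = {p. \<exists>qs. set qs \<subseteq> forms d \<and> p = sum_list (map (\<lambda>q. q ^ 2) qs)}"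

definition A_map :: "real poly \<times> real poly \<Rightarrow> real poly \<times> real poly \<Rightarrow> real poly" where
  "A_map u v = fst u * fst v + snd u * snd v"

definition sigma :: "real poly \<times> real poly \<Rightarrow> real poly" where
  "sigma v = (fst v)\<^sup>2 + (snd v)\<^sup>2"

definition pairs :: "nat \<Rightarrow> (real poly \<times> real poly) set" where
  "pairs d = forms d \<times> forms d"

definition ker_A :: "nat \<Rightarrow> real poly \<times> real poly \<Rightarrow> (real poly \<times> real poly) set" where
  "ker_A d u = {v \<in> pairs d. A_map u v = 0}"

definition im_A :: "nat \<Rightarrow> real poly \<times> real poly \<Rightarrow> real poly set" where
  "im_A d u = A_map u ` pairs d"

definition cone_gen :: "real poly set \<Rightarrow> real poly set" where
  "cone_gen S = {x. \<exists>F c. finite F \<and> F \<subseteq> S \<and> (\<forall>y\<in>F. c y \<ge> 0) \<and>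
                          x = (\<Sum>y\<in>F. smult (c y) y)}"

definition inner_product_on :: "real poly set \<Rightarrow> (real poly \<Rightarrow> real poly \<Rightarrow> real) \<Rightarrow> bool" where
  "inner_product_on V ip \<longleftrightarrow>
     (\<forall>x\<in>V. \<forall>y\<in>V. ip x y = ip y x) \<and>
     (\<forall>x\<in>V. \<forall>y\<in>V. \<forall>z\<in>V. ip (x + y) z = ip x z + ip y z) \<and>
     (\<forall>a. \<forall>x\<in>V. \<forall>y\<in>V. ip (smult a x) y = a * ip x y) \<and>
     (\<forall>x\<in>V. x \<noteq> 0 \<longrightarrow> ip x x > 0)"

definition f_obj :: "(real poly \<Rightarrow> real poly \<Rightarrow> real) \<Rightarrow> real poly \<Rightarrow> real poly \<times> real poly \<Rightarrow> real" where
  "f_obj ip p u = ip (sigma u - p) (sigma u - p)"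

definition grad_zero :: "nat \<Rightarrow> (real poly \<Rightarrow> real poly \<Rightarrow> real) \<Rightarrow> real poly \<Rightarrow> real poly \<times> real poly \<Rightarrow> bool" where
  "grad_zero d ip p u \<longleftrightarrow> (\<forall>v\<in>pairs d. ip (A_map u v) (sigma u - p) = 0)"

definition hess_psd :: "nat \<Rightarrow> (real poly \<Rightarrow> real poly \<Rightarrow> real) \<Rightarrow> real poly \<Rightarrow> real poly \<times> real poly \<Rightarrow> bool" where
  "hess_psd d ip p u \<longleftrightarrow>
     (\<forall>v\<in>pairs d. ip (sigma v) (sigma u - p) + 2 * ip (A_map u v) (A_map u v) \<ge> 0)"

end

theory Submission
  imports Defs
begin

text \<open>Write \<open>r = \<sigma>(u) - p\<close> for the residual.  The first-order condition says that \<open>r\<close> is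
  orthogonal to \<open>im A\<^sub>u\<close>, which contains \<open>\<sigma>(u) = A\<^sub>u(u)\<close>; on \<open>ker A\<^sub>u\<close> the second-order
  condition reduces to \<open>\<langle>\<sigma>(v), r\<rangle> \<ge> 0\<close>, so \<open>r\<close> pairs nonnegatively with the cone generated
  by \<open>\<sigma>(ker A\<^sub>u)\<close>.  Writing \<open>p = a + b\<close> accordingly,
  \<open>\<parallel>r\<parallel>\<^sup>2 = \<langle>\<sigma>(u), r\<rangle> - \<langle>a, r\<rangle> - \<langle>b, r\<rangle> = -\<langle>b, r\<rangle> \<le> 0\<close>.\<close>

lemma forms_zero: "0 \<in> forms n"
  unfolding forms_def by simp

lemma forms_add: "a \<in> forms n \<Longrightarrow> b \<in> forms n \<Longrightarrow> a + b \<in> forms n"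
  unfolding forms_def using degree_add_le by auto

lemma forms_diff: "a \<in> forms n \<Longrightarrow> b \<in> forms n \<Longrightarrow> a - b \<in> forms n"
  unfolding forms_def using degree_diff_le by auto

lemma forms_smult: "a \<in> forms n \<Longrightarrow> smult c a \<in> forms n"
  unfolding forms_def using degree_smult_le le_trans by blast

lemma forms_mult: "a \<in> forms m \<Longrightarrow> b \<in> forms n \<Longrightarrow> a * b \<in> forms (m + n)"
  unfolding forms_def using degree_mult_le[of a b] by auto

lemma forms_sum_smult:
  "finite F \<Longrightarrow> F \<subseteq> forms n \<Longrightarrow> (\<Sum>y\<in>F. smult (c y) y) \<in> forms n"
  by (induction F rule: finite_induct) (auto intro: forms_add forms_smult forms_zero)

lemma cone_gen_subset_forms: "S \<subseteq> forms n \<Longrightarrow> cone_gen S \<subseteq> forms n"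
  unfolding cone_gen_def using forms_sum_smult by blast

lemma A_map_in_forms: "u \<in> pairs d \<Longrightarrow> v \<in> pairs d \<Longrightarrow> A_map u v \<in> forms (2 * d)"
  unfolding A_map_def pairs_def mult_2 by (auto intro!: forms_add forms_mult)

lemma sigma_eq_A_map_self: "sigma u = A_map u u"
  unfolding sigma_def A_map_def power2_eq_square by simp

lemma sigma_in_forms: "v \<in> pairs d \<Longrightarrow> sigma v \<in> forms (2 * d)"
  unfolding sigma_eq_A_map_self by (rule A_map_in_forms)

lemma im_A_subset_forms: "u \<in> pairs d \<Longrightarrow> im_A d u \<subseteq> forms (2 * d)"
  unfolding im_A_def using A_map_in_forms by blast

lemma sigma_ker_A_subset_forms: "sigma ` ker_A d u \<subseteq> forms (2 * d)"
  unfolding ker_A_def using sigma_in_forms by blast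

lemma ip_add_left:
  "inner_product_on V ip \<Longrightarrow> x \<in> V \<Longrightarrow> y \<in> V \<Longrightarrow> z \<in> V \<Longrightarrow> ip (x + y) z = ip x z + ip y z"
  unfolding inner_product_on_def by blast

lemma ip_smult_left:
  "inner_product_on V ip \<Longrightarrow> x \<in> V \<Longrightarrow> z \<in> V \<Longrightarrow> ip (smult a x) z = a * ip x z"
  unfolding inner_product_on_def by blast

lemma ip_zero_left:
  assumes "inner_product_on V ip" "0 \<in> V" "z \<in> V"
  shows "ip 0 z = 0"
  using ip_smult_left[OF assms, of 0] by simp

lemma ip_diff_left:
  assumes "inner_product_on V ip" "x - y \<in> V" "y \<in> V" "z \<in> V"
  shows "ip (x - y) z = ip x z - ip y z"
  using ip_add_left[OF assms] by simp

lemma ip_self_nonneg: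
  assumes "inner_product_on V ip" "0 \<in> V" "x \<in> V"
  shows "ip x x \<ge> 0"
proof (cases "x = 0")
  case True
  then show ?thesis using ip_zero_left[OF assms(1,2,2)] by simp
next
  case False
  then show ?thesis using assms(1,3) unfolding inner_product_on_def by (meson less_imp_le)
qed

lemma ip_cone_gen_nonneg:
  assumes ip: "inner_product_on (forms n) ip" and S: "S \<subseteq> forms n" and z: "z \<in> forms n"
    and nonneg: "\<And>y. y \<in> S \<Longrightarrow> ip y z \<ge> 0" and b: "b \<in> cone_gen S"
  shows "ip b z \<ge> 0"
proof -
  obtain F c where F: "finite F" "F \<subseteq> S" "\<forall>y\<in>F. c y \<ge> 0"
    and b_eq: "b = (\<Sum>y\<in>F. smult (c y) y)"
    using b unfolding cone_gen_def by blast
  from F have "ip (\<Sum>y\<in>F. smult (c y) y) z \<ge> 0"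
  proof (induction F rule: finite_induct)
    case empty
    show ?case using ip_zero_left[OF ip forms_zero z] by simp
  next
    case (insert y F)
    have y: "y \<in> forms n" and Fsub: "F \<subseteq> forms n" using insert.prems(1) S by auto
    have sum_in: "(\<Sum>x\<in>F. smult (c x) x) \<in> forms n"
      using forms_sum_smult[OF \<open>finite F\<close> Fsub] .
    have "ip (\<Sum>x\<in>insert y F. smult (c x) x) z = c y * ip y z + ip (\<Sum>x\<in>F. smult (c x) x) z"
      using insert.hyps ip_add_left[OF ip forms_smult[OF y] sum_in z] ip_smult_left[OF ip y z]
      by simp
    also have "\<dots> \<ge> 0"
      using insert nonneg by (simp add: subset_iff)
    finally show ?case .
  qed
  then show ?thesis using b_eq by simp
qed

lemma grad_zero_orthogonal_im_A:
  "grad_zero d ip p u \<Longrightarrow> a \<in> im_A d u \<Longrightarrow> ip a (sigma u - p) = 0"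
  unfolding grad_zero_def im_A_def by blast

lemma hess_psd_on_ker_A:
  assumes "inner_product_on (forms (2 * d)) ip" "hess_psd d ip p u" "v \<in> ker_A d u"
  shows "ip (sigma v) (sigma u - p) \<ge> 0"
proof -
  have "v \<in> pairs d" "A_map u v = 0" using assms(3) unfolding ker_A_def by auto
  moreover have "ip 0 0 = 0" using ip_zero_left[OF assms(1) forms_zero forms_zero] .
  ultimately show ?thesis using assms(2) unfolding hess_psd_def by fastforce
qed

theorem proposition4p2:
  fixes d :: nat and ip :: "real poly \<Rightarrow> real poly \<Rightarrow> real"
    and u :: "real poly \<times> real poly" and p :: "real poly"
  assumes "inner_product_on (forms (2 * d)) ip"
    and "u \<in> pairs d"
    and "p \<in> sos_forms d"
    and "grad_zero d ip p u"
    and "hess_psd d ip p u"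
    and "p \<in> {a + b | a b. a \<in> im_A d u \<and> b \<in> cone_gen (sigma ` ker_A d u)}"
  shows "f_obj ip p u = 0"
proof -
  note ip = assms(1)
  obtain a b where p: "p = a + b" and a: "a \<in> im_A d u" and b: "b \<in> cone_gen (sigma ` ker_A d u)"
    using assms(6) by blast
  define r where "r = sigma u - p"
  have a_in: "a \<in> forms (2 * d)" using a im_A_subset_forms[OF assms(2)] by blast
  have b_in: "b \<in> forms (2 * d)" using b cone_gen_subset_forms[OF sigma_ker_A_subset_forms] by blast
  have p_in: "p \<in> forms (2 * d)" using p forms_add[OF a_in b_in] by simp
  have r_in: "r \<in> forms (2 * d)" unfolding r_def using forms_diff sigma_in_forms[OF assms(2)] p_in by blast
  have "sigma u \<in> im_A d u"
    unfolding im_A_def sigma_eq_A_map_self using assms(2) by blast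
  then have "ip (sigma u) r = 0" unfolding r_def by (rule grad_zero_orthogonal_im_A[OF assms(4)])
  moreover have "ip a r = 0" unfolding r_def using grad_zero_orthogonal_im_A[OF assms(4) a] .
  moreover have "ip b r \<ge> 0"
    using ip_cone_gen_nonneg[OF ip sigma_ker_A_subset_forms r_in _ b] hess_psd_on_ker_A[OF ip assms(5)]
    unfolding r_def by blast
  moreover have "ip r r = ip (sigma u) r - (ip a r + ip b r)"
    using ip_diff_left[OF ip r_in[unfolded r_def] p_in r_in] ip_add_left[OF ip a_in b_in r_in] p
    unfolding r_def by simp
  ultimately have "ip r r \<le> 0" by linarith
  with ip_self_nonneg[OF ip forms_zero r_in] show ?thesis unfolding f_obj_def r_def by simp
qed

end
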